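(* Let $R$ be a commutative ring, let $n\ge 3$ be odd, $l\ge 1$, $m\ge 3$, and let $A\in R^{l\times n}$, $B\in R^{n\times m}$. Then: (i) if $m$ is odd, the product $AB$ can be computed using $n(lm+l+m-1)/2$ multiplications; (ii) if $m$ is even, the product $AB$ can be computed using $\big(n(lm+l+m-1)+l-1\big)/2$ multiplications.
   Context: "The product can be computed using $k$ multiplications" means: there are $k$ products, each a product of two linear forms with integer coefficients in the entries of $A$ and $B$ (the two factors may each involve entries of both $A$ and $B$; commutativity of $R$ may be used), such that every entry of $AB$ is an integer linear combination of these $k$ products, identically for all inputs $A,B$ over any commutative ring. Additions, subtractions and multiplications by integer constants are not counted. *)

theory Defs
  imports Main "HOL-Library.Poly_Mapping"
begin

text \<open>Indeterminates: a i j (entries of A, l x n) and b j p (entries of B, n x m).\<close>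
datatype var = VarA nat nat | VarB nat nat

text \<open>The universal commutative ring: integer polynomials in the indeterminates.\<close>
type_synonym zpoly = "(var \<Rightarrow>\<^sub>0 nat) \<Rightarrow>\<^sub>0 int"

definition X :: "var \<Rightarrow> zpoly" where
  "X v = Poly_Mapping.single (Poly_Mapping.single v 1) 1"

definition lin_form ::
  "nat \<Rightarrow> nat \<Rightarrow> nat \<Rightarrow> (nat \<Rightarrow> nat \<Rightarrow> int) \<Rightarrow> (nat \<Rightarrow> nat \<Rightarrow> int)
   \<Rightarrow> (nat \<Rightarrow> nat \<Rightarrow> 'a::comm_ring_1) \<Rightarrow> (nat \<Rightarrow> nat \<Rightarrow> 'a) \<Rightarrow> 'a" where
  "lin_form l n m \<alpha> \<beta> a b =
     (\<Sum>i<l. \<Sum>j<n. of_int (\<alpha> i j) * a i j) + (\<Sum>j<n. \<Sum>p<m. of_int (\<beta> j p) * b j p)"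

definition computes_with ::
  "nat \<Rightarrow> nat \<Rightarrow> nat \<Rightarrow> nat
   \<Rightarrow> (nat \<Rightarrow> nat \<Rightarrow> nat \<Rightarrow> int) \<Rightarrow> (nat \<Rightarrow> nat \<Rightarrow> nat \<Rightarrow> int)
   \<Rightarrow> (nat \<Rightarrow> nat \<Rightarrow> nat \<Rightarrow> int) \<Rightarrow> (nat \<Rightarrow> nat \<Rightarrow> nat \<Rightarrow> int)
   \<Rightarrow> (nat \<Rightarrow> nat \<Rightarrow> nat \<Rightarrow> int)
   \<Rightarrow> (nat \<Rightarrow> nat \<Rightarrow> 'a::comm_ring_1) \<Rightarrow> (nat \<Rightarrow> nat \<Rightarrow> 'a) \<Rightarrow> bool" where
  "computes_with l n m k \<alpha> \<beta> \<gamma> \<delta> c a b \<longleftrightarrow>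
     (\<forall>i<l. \<forall>p<m. (\<Sum>j<n. a i j * b j p) =
        (\<Sum>t<k. of_int (c i p t) *
            (lin_form l n m (\<alpha> t) (\<beta> t) a b * lin_form l n m (\<gamma> t) (\<delta> t) a b)))"

text \<open>The l x n by n x m product can be computed with k multiplications: the identity
  holds formally, i.e. in the polynomial ring over Z in the entries (equivalently,
  identically over every commutative ring).\<close>
definition mult_computable :: "nat \<Rightarrow> nat \<Rightarrow> nat \<Rightarrow> nat \<Rightarrow> bool" where
  "mult_computable l n m k \<longleftrightarrow>
     (\<exists>\<alpha> \<beta> \<gamma> \<delta> c. computes_with l n m k \<alpha> \<beta> \<gamma> \<delta> c
        (\<lambda>i j. X (VarA i j)) (\<lambda>j p. X (VarB j p)))"

end

theory Submission
  imports Defs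
begin

text \<open>Write \<open>n = 2R + 3\<close> and split the inner index into the block \<open>{0, 1, 2}\<close> and \<open>R\<close> pairs
  \<open>(j, k)\<close>. For a pair, \<open>a\<^sub>i\<^sub>j b\<^sub>j\<^sub>p + a\<^sub>i\<^sub>k b\<^sub>k\<^sub>p\<close> is read off from the single product
  \<open>(a\<^sub>i\<^sub>j + b\<^sub>k\<^sub>p - b\<^sub>k\<^sub>0)(a\<^sub>i\<^sub>k + b\<^sub>j\<^sub>p)\<close> per entry, because commutativity lets the
  cross terms be corrected by products that depend only on the row or only on the column:
  \<open>lm + l + (m - 1)\<close> products in all. In the block \<open>{0, 1, 2}\<close> the products
  \<open>(a\<^sub>i\<^sub>j - b\<^sub>k\<^sub>j)(a\<^sub>i\<^sub>k - b\<^sub>j\<^sub>k)\<close> and \<open>b\<^sub>k\<^sub>j b\<^sub>j\<^sub>k\<close> are shared by all columns; beyond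
  them the columns 0, 1, 2 need \<open>l\<close> products each, every further pair of columns \<open>3(l + 1)\<close>,
  and a single leftover column (for even \<open>m\<close>) \<open>2l + 1\<close>. For \<open>m = 2S + 3\<close> the block thus costs
  \<open>3(l + 1)(S + 2) - 3\<close> products, and adding up gives exactly the two bounds.\<close>

definition is_lin_form ::
  "nat \<Rightarrow> nat \<Rightarrow> nat \<Rightarrow> (nat \<Rightarrow> nat \<Rightarrow> 'a::comm_ring_1) \<Rightarrow> (nat \<Rightarrow> nat \<Rightarrow> 'a) \<Rightarrow> 'a \<Rightarrow> bool" where
  "is_lin_form l n m a b x \<longleftrightarrow> (\<exists>\<alpha> \<beta>. x = lin_form l n m \<alpha> \<beta> a b)"

lemma is_lin_form_add:
  "is_lin_form l n m a b x \<Longrightarrow> is_lin_form l n m a b y \<Longrightarrow> is_lin_form l n m a b (x + y)"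
proof -
  assume "is_lin_form l n m a b x" "is_lin_form l n m a b y"
  then obtain \<alpha> \<beta> \<alpha>' \<beta>' where "x = lin_form l n m \<alpha> \<beta> a b" "y = lin_form l n m \<alpha>' \<beta>' a b"
    unfolding is_lin_form_def by blast
  then have "x + y = lin_form l n m (\<lambda>i j. \<alpha> i j + \<alpha>' i j) (\<lambda>j p. \<beta> j p + \<beta>' j p) a b"
    by (simp add: lin_form_def ring_distribs sum.distrib)
  then show ?thesis
    unfolding is_lin_form_def by blast
qed

lemma is_lin_form_uminus: "is_lin_form l n m a b x \<Longrightarrow> is_lin_form l n m a b (- x)"
proof -
  assume "is_lin_form l n m a b x"
  then obtain \<alpha> \<beta> where "x = lin_form l n m \<alpha> \<beta> a b"
    unfolding is_lin_form_def by blast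
  then have "- x = lin_form l n m (\<lambda>i j. - \<alpha> i j) (\<lambda>j p. - \<beta> j p) a b"
    by (simp add: lin_form_def sum_negf)
  then show ?thesis
    unfolding is_lin_form_def by blast
qed

lemma is_lin_form_diff:
  "is_lin_form l n m a b x \<Longrightarrow> is_lin_form l n m a b y \<Longrightarrow> is_lin_form l n m a b (x - y)"
  using is_lin_form_add[of l n m a b x "- y"] is_lin_form_uminus[of l n m a b y] by simp

lemma sum_sum_of_bool_eq:
  fixes f :: "nat \<Rightarrow> nat \<Rightarrow> 'a::comm_semiring_1"
  assumes "i < l" "j < n"
  shows "(\<Sum>i'<l. \<Sum>j'<n. of_bool (i' = i \<and> j' = j) * f i' j') = f i j"
proof -
  have "(\<Sum>i'<l. \<Sum>j'<n. of_bool (i' = i \<and> j' = j) * f i' j')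
      = (\<Sum>i'<l. of_bool (i' = i) * (\<Sum>j'<n. of_bool (j' = j) * f i' j'))"
    by (simp only: of_bool_conj sum_distrib_left mult.assoc)
  also have "\<dots> = f i j"
    using assms by simp
  finally show ?thesis .
qed

lemma is_lin_form_entry_a: "i < l \<Longrightarrow> j < n \<Longrightarrow> is_lin_form l n m a b (a i j)"
  unfolding is_lin_form_def lin_form_def
  by (rule exI[of _ "\<lambda>i' j'. of_bool (i' = i \<and> j' = j)"], rule exI[of _ "\<lambda>_ _. 0"])
    (simp only: of_int_of_bool sum_sum_of_bool_eq, simp)

lemma is_lin_form_entry_b: "j < n \<Longrightarrow> p < m \<Longrightarrow> is_lin_form l n m a b (b j p)"
  unfolding is_lin_form_def lin_form_def
  by (rule exI[of _ "\<lambda>_ _. 0"], rule exI[of _ "\<lambda>j' p'. of_bool (j' = j \<and> p' = p)"])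
    (simp only: of_int_of_bool sum_sum_of_bool_eq, simp)

lemmas is_lin_form_intros =
  is_lin_form_add is_lin_form_uminus is_lin_form_diff is_lin_form_entry_a is_lin_form_entry_b

definition computable ::
  "nat \<Rightarrow> nat \<Rightarrow> nat \<Rightarrow> (nat \<Rightarrow> nat \<Rightarrow> 'a::comm_ring_1) \<Rightarrow> (nat \<Rightarrow> nat \<Rightarrow> 'a)
   \<Rightarrow> nat \<Rightarrow> (nat \<Rightarrow> nat \<Rightarrow> 'a) \<Rightarrow> bool" where
  "computable l n m a b k f \<longleftrightarrow>
     (\<exists>x y c. (\<forall>t<k. is_lin_form l n m a b (x t) \<and> is_lin_form l n m a b (y t)) \<and>
        (\<forall>i<l. \<forall>p<m. f i p = (\<Sum>t<k. of_int (c i p t) * (x t * y t))))"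

lemma mult_computable_if_computable:
  assumes "computable l n m (\<lambda>i j. X (VarA i j)) (\<lambda>j p. X (VarB j p)) k
             (\<lambda>i p. \<Sum>j<n. X (VarA i j) * X (VarB j p))"
  shows "mult_computable l n m k"
proof -
  let ?a = "\<lambda>i j. X (VarA i j)" and ?b = "\<lambda>j p. X (VarB j p)"
  obtain x y c where lin: "\<forall>t<k. is_lin_form l n m ?a ?b (x t) \<and> is_lin_form l n m ?a ?b (y t)"
    and eq: "\<forall>i<l. \<forall>p<m. (\<Sum>j<n. ?a i j * ?b j p) = (\<Sum>t<k. of_int (c i p t) * (x t * y t))"
    using assms unfolding computable_def by blast
  from lin obtain \<alpha> \<beta> \<gamma> \<delta> where
    "\<forall>t<k. x t = lin_form l n m (\<alpha> t) (\<beta> t) ?a ?b \<and> y t = lin_form l n m (\<gamma> t) (\<delta> t) ?a ?b"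
    unfolding is_lin_form_def by metis
  with eq have "computes_with l n m k \<alpha> \<beta> \<gamma> \<delta> c ?a ?b"
    unfolding computes_with_def by simp
  then show ?thesis
    unfolding mult_computable_def by blast
qed

lemma computable_zero: "computable l n m a b 0 (\<lambda>_ _. 0)"
  unfolding computable_def by simp

lemma computable_cong:
  "computable l n m a b k f \<Longrightarrow> k = k' \<Longrightarrow> (\<And>i p. i < l \<Longrightarrow> p < m \<Longrightarrow> f i p = g i p)
    \<Longrightarrow> computable l n m a b k' g"
proof -
  assume "computable l n m a b k f" and k: "k = k'"
    and fg: "\<And>i p. i < l \<Longrightarrow> p < m \<Longrightarrow> f i p = g i p"
  then obtain x y c where lin: "\<forall>t<k. is_lin_form l n m a b (x t) \<and> is_lin_form l n m a b (y t)"
    and f: "\<forall>i<l. \<forall>p<m. f i p = (\<Sum>t<k. of_int (c i p t) * (x t * y t))"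
    unfolding computable_def by blast
  from f fg have "\<forall>i<l. \<forall>p<m. g i p = (\<Sum>t<k'. of_int (c i p t) * (x t * y t))"
    by (simp add: k)
  with lin k show ?thesis
    unfolding computable_def by blast
qed

lemma computable_product:
  "is_lin_form l n m a b x \<Longrightarrow> is_lin_form l n m a b y
    \<Longrightarrow> computable l n m a b 1 (\<lambda>i p. of_int (w i p) * (x * y))"
  unfolding computable_def
  by (rule exI[of _ "\<lambda>_. x"], rule exI[of _ "\<lambda>_. y"], rule exI[of _ "\<lambda>i p _. w i p"]) simp

lemma sum_lessThan_add: "(\<Sum>t<(k1::nat) + k2. f t) = (\<Sum>t<k1. f t) + (\<Sum>t<k2. f (k1 + t))"
  by (induct k2) (simp_all add: add.assoc)

lemma computable_add:
  assumes "computable l n m a b k1 f" "computable l n m a b k2 g"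
  shows "computable l n m a b (k1 + k2) (\<lambda>i p. f i p + g i p)"
proof -
  obtain x1 y1 c1 where lin1: "\<forall>t<k1. is_lin_form l n m a b (x1 t) \<and> is_lin_form l n m a b (y1 t)"
    and f: "\<forall>i<l. \<forall>p<m. f i p = (\<Sum>t<k1. of_int (c1 i p t) * (x1 t * y1 t))"
    using assms(1) unfolding computable_def by blast
  obtain x2 y2 c2 where lin2: "\<forall>t<k2. is_lin_form l n m a b (x2 t) \<and> is_lin_form l n m a b (y2 t)"
    and g: "\<forall>i<l. \<forall>p<m. g i p = (\<Sum>t<k2. of_int (c2 i p t) * (x2 t * y2 t))"
    using assms(2) unfolding computable_def by blast
  define x where "x t = (if t < k1 then x1 t else x2 (t - k1))" for t
  define y where "y t = (if t < k1 then y1 t else y2 (t - k1))" for t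
  define c where "c i p t = (if t < k1 then c1 i p t else c2 i p (t - k1))" for i p t
  have "\<forall>t<k1 + k2. is_lin_form l n m a b (x t) \<and> is_lin_form l n m a b (y t)"
    using lin1 lin2 by (simp add: x_def y_def)
  moreover have "\<forall>i<l. \<forall>p<m. f i p + g i p = (\<Sum>t<k1 + k2. of_int (c i p t) * (x t * y t))"
    using f g by (simp add: sum_lessThan_add x_def y_def c_def)
  ultimately show ?thesis
    unfolding computable_def by blast
qed

lemma computable_uminus:
  "computable l n m a b k f \<Longrightarrow> computable l n m a b k (\<lambda>i p. - f i p)"
proof -
  assume "computable l n m a b k f"
  then obtain x y c where lin: "\<forall>t<k. is_lin_form l n m a b (x t) \<and> is_lin_form l n m a b (y t)"
    and f: "\<forall>i<l. \<forall>p<m. f i p = (\<Sum>t<k. of_int (c i p t) * (x t * y t))"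
    unfolding computable_def by blast
  from f have "\<forall>i<l. \<forall>p<m. - f i p = (\<Sum>t<k. of_int (- c i p t) * (x t * y t))"
    by (simp add: sum_negf)
  with lin show ?thesis
    unfolding computable_def by (intro exI[of _ x] exI[of _ y] exI[of _ "\<lambda>i p t. - c i p t"]) simp
qed

lemma computable_sum:
  assumes "finite S" "\<And>s. s \<in> S \<Longrightarrow> computable l n m a b k (f s)"
  shows "computable l n m a b (card S * k) (\<lambda>i p. \<Sum>s\<in>S. f s i p)"
  using assms
proof (induction S rule: finite_induct)
  case empty
  show ?case
    using computable_zero by simp
next
  case (insert s S)
  have "computable l n m a b (k + card S * k) (\<lambda>i p. f s i p + (\<Sum>s\<in>S. f s i p))"
    using insert by (intro computable_add) simp_all
  with insert show ?case
    by simp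
qed

lemma sum_of_bool_eq_mult:
  "finite S \<Longrightarrow> i \<in> S \<Longrightarrow> (\<Sum>s\<in>S. of_bool (s = i) * f s) = (f i :: 'a::comm_semiring_1)"
  by simp

lemma computable_row_products:
  assumes "\<And>i. i < l \<Longrightarrow> is_lin_form l n m a b (x i)" "\<And>i. i < l \<Longrightarrow> is_lin_form l n m a b (y i)"
  shows "computable l n m a b l (\<lambda>i p. of_int (w p) * (x i * y i))"
proof -
  have "computable l n m a b (card {..<l} * 1)
      (\<lambda>i p. \<Sum>s<l. of_int (of_bool (s = i) * w p) * (x s * y s))"
    by (intro computable_sum computable_product) (simp_all add: assms)
  then show ?thesis
  proof (rule computable_cong)
    fix i p
    assume "i < l"
    then show "(\<Sum>s<l. of_int (of_bool (s = i) * w p) * (x s * y s)) = of_int (w p) * (x i * y i)"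
      unfolding of_int_mult of_int_of_bool mult.assoc by (simp only: sum_of_bool_eq_mult finite_lessThan lessThan_iff)
  qed simp
qed

lemma computable_entry_products:
  assumes "\<And>i p. i < l \<Longrightarrow> p < m \<Longrightarrow> is_lin_form l n m a b (x i p)"
    and "\<And>i p. i < l \<Longrightarrow> p < m \<Longrightarrow> is_lin_form l n m a b (y i p)"
  shows "computable l n m a b (l * m) (\<lambda>i p. x i p * y i p)"
proof -
  let ?S = "{..<l} \<times> {..<m}"
  have "computable l n m a b (card ?S * 1) (\<lambda>i p.
      \<Sum>s\<in>?S. of_int (of_bool (s = (i, p))) * (x (fst s) (snd s) * y (fst s) (snd s)))"
    by (intro computable_sum computable_product) (simp_all add: assms mem_Times_iff)
  then show ?thesis
  proof (rule computable_cong)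
    fix i p
    assume "i < l" "p < m"
    then show "(\<Sum>s\<in>?S. of_int (of_bool (s = (i, p))) * (x (fst s) (snd s) * y (fst s) (snd s)))
        = x i p * y i p"
      unfolding of_int_of_bool by (subst sum_of_bool_eq_mult) auto
  qed simp
qed

lemma computable_column_products:
  assumes "\<And>p. p < m \<Longrightarrow> is_lin_form l n m a b (x p)" "\<And>p. p < m \<Longrightarrow> is_lin_form l n m a b (y p)"
    and "x 0 * y 0 = 0"
  shows "computable l n m a b (m - 1) (\<lambda>i p. x p * y p)"
proof -
  have "computable l n m a b (card {1..<m} * 1)
      (\<lambda>i p. \<Sum>s\<in>{1..<m}. of_int (of_bool (s = p)) * (x s * y s))"
    by (intro computable_sum computable_product) (simp_all add: assms)
  then show ?thesis
  proof (rule computable_cong)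
    fix i p
    assume "p < m"
    then show "(\<Sum>s\<in>{1..<m}. of_int (of_bool (s = p)) * (x s * y s)) = x p * y p"
      using assms(3) by (cases "p = 0") (simp_all add: sum_of_bool_eq_mult)
  qed simp
qed

lemma computable_inner_pair:
  assumes "j < n" "k < n" "0 < m"
  shows "computable l n m a b (l * m + l + m - 1) (\<lambda>i p. a i j * b j p + a i k * b k p)"
proof -
  have "computable l n m a b (l * m + l + (m - 1)) (\<lambda>i p.
      (a i j + b k p - b k 0) * (a i k + b j p) + of_int (- 1) * ((a i j - b k 0) * a i k)
      + - ((b k p - b k 0) * b j p))"
    by (intro computable_add computable_entry_products computable_row_products computable_uminus
        computable_column_products) (simp_all add: assms is_lin_form_intros)
  then show ?thesis
    by (rule computable_cong) (use assms(3) in \<open>simp_all add: algebra_simps\<close>)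
qed

definition shifted_product :: "'a::comm_ring_1 \<Rightarrow> 'a \<Rightarrow> 'a \<Rightarrow> 'a \<Rightarrow> 'a" where
  "shifted_product x y u v = (x + u) * (y + v) - u * v"

lemma shifted_product_eq: "shifted_product x y u v = x * y + x * v + u * y"
  by (simp add: shifted_product_def algebra_simps)

lemma computable_shifted_products:
  assumes "\<And>i. i < l \<Longrightarrow> is_lin_form l n m a b (x i)" "\<And>i. i < l \<Longrightarrow> is_lin_form l n m a b (y i)"
    and "is_lin_form l n m a b u" "is_lin_form l n m a b v"
  shows "computable l n m a b (l + 1) (\<lambda>i p. of_int (w p) * shifted_product (x i) (y i) u v)"
proof -
  have "computable l n m a b (l + 1)
      (\<lambda>i p. of_int (w p) * ((x i + u) * (y i + v)) + of_int (- w p) * (u * v))"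
    by (intro computable_add computable_row_products computable_product)
      (simp_all add: assms is_lin_form_add)
  then show ?thesis
    by (rule computable_cong) (simp_all add: shifted_product_def algebra_simps)
qed

text \<open>The weights depend only on the type of the column \<open>p\<close>: one of 0, 1, 2, the first or the
  second column of a pair \<open>(q, q + 1)\<close> with odd \<open>q \<ge> 3\<close>, or the leftover column
  \<open>q = m - 1\<close> of an even \<open>m\<close>.\<close>

definition shared_terms ::
  "nat \<Rightarrow> (nat \<Rightarrow> nat \<Rightarrow> 'a::comm_ring_1) \<Rightarrow> (nat \<Rightarrow> nat \<Rightarrow> 'a) \<Rightarrow> nat \<Rightarrow> nat \<Rightarrow> 'a" where
  "shared_terms m a b i p =
     of_int (if p \<le> 1 \<or> (3 \<le> p \<and> odd p) then - 1 else 0)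
       * shifted_product (a i 0) (a i 1) (- b 1 0) (- b 0 1)
   + of_int (if p = 0 \<or> p = 2 \<or> (4 \<le> p \<and> even p) then - 1 else 0)
       * shifted_product (a i 0) (a i 2) (- b 2 0) (- b 0 2)
   + of_int (if p = 1 \<or> p = 2 \<or> (3 \<le> p \<and> odd p \<and> Suc p < m) then - 1
             else if 4 \<le> p \<and> even p then 1 else 0)
       * shifted_product (a i 1) (a i 2) (- b 2 1) (- b 1 2)
   + of_int (of_bool (p = 0)) * (a i 0 * (a i 1 + a i 2 + b 0 0 - b 0 1 - b 0 2))
   + of_int (of_bool (p = 1)) * (a i 1 * (a i 0 + a i 2 + b 1 1 - b 1 0 - b 1 2))
   + of_int (of_bool (p = 2)) * (a i 2 * (a i 0 + a i 1 + b 2 2 - b 2 0 - b 2 1))"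

definition pair_terms ::
  "(nat \<Rightarrow> nat \<Rightarrow> 'a::comm_ring_1) \<Rightarrow> (nat \<Rightarrow> nat \<Rightarrow> 'a) \<Rightarrow> nat \<Rightarrow> nat \<Rightarrow> nat \<Rightarrow> 'a" where
  "pair_terms a b q i p =
     of_int (of_bool (p = q))
       * shifted_product (a i 0) (a i 1) (b 1 q + b 1 (Suc q) - b 1 0) (b 0 q - b 0 1)
   + of_int (of_bool (p = Suc q))
       * shifted_product (a i 0) (a i 2) (b 2 q + b 2 (Suc q) - b 2 0) (b 0 (Suc q) - b 0 2)
   + of_int (of_bool (p = q) - of_bool (p = Suc q))
       * shifted_product (a i 1) (a i 2) (b 2 q - b 2 1) (- b 1 (Suc q) - b 1 2)"

definition last_column_terms ::
  "(nat \<Rightarrow> nat \<Rightarrow> 'a::comm_ring_1) \<Rightarrow> (nat \<Rightarrow> nat \<Rightarrow> 'a) \<Rightarrow> nat \<Rightarrow> nat \<Rightarrow> nat \<Rightarrow> 'a" where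
  "last_column_terms a b q i p =
     of_int (of_bool (p = q)) * shifted_product (a i 0) (a i 1) (b 1 q - b 1 0) (b 0 q - b 0 1)
   + of_int (of_bool (p = q)) * (a i 2 * b 2 q)"

lemma computable_shared_terms:
  assumes "3 \<le> n" "3 \<le> m"
  shows "computable l n m a b (6 * l + 3) (shared_terms m a b)"
proof -
  have "computable l n m a b ((l + 1) + (l + 1) + (l + 1) + l + l + l) (shared_terms m a b)"
    unfolding shared_terms_def
    by (intro computable_add computable_shifted_products computable_row_products)
      (use assms in \<open>simp_all add: is_lin_form_intros\<close>)
  then show ?thesis
    by (rule computable_cong) simp_all
qed

lemma computable_pair_terms:
  assumes "3 \<le> n" "3 \<le> m" "Suc q < m"
  shows "computable l n m a b (3 * l + 3) (pair_terms a b q)"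
proof -
  have "computable l n m a b ((l + 1) + (l + 1) + (l + 1)) (pair_terms a b q)"
    unfolding pair_terms_def
    by (intro computable_add computable_shifted_products)
      (use assms in \<open>simp_all add: is_lin_form_intros\<close>)
  then show ?thesis
    by (rule computable_cong) simp_all
qed

lemma computable_last_column_terms:
  assumes "3 \<le> n" "3 \<le> m" "q < m"
  shows "computable l n m a b (2 * l + 1) (last_column_terms a b q)"
proof -
  have "computable l n m a b ((l + 1) + l) (last_column_terms a b q)"
    unfolding last_column_terms_def
    by (intro computable_add computable_shifted_products computable_row_products)
      (use assms in \<open>simp_all add: is_lin_form_intros\<close>)
  then show ?thesis
    by (rule computable_cong) simp_all
qed

lemma pair_terms_eq_0: "p \<noteq> q \<Longrightarrow> p \<noteq> Suc q \<Longrightarrow> pair_terms a b q i p = 0"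
  by (simp add: pair_terms_def)

lemma sum_pair_terms:
  "(\<Sum>s<S. pair_terms a b (2 * s + 3) i p) =
     (if 3 \<le> p \<and> p < 2 * S + 3 then pair_terms a b (2 * ((p - 3) div 2) + 3) i p else 0)"
proof (cases "3 \<le> p \<and> p < 2 * S + 3")
  case True
  define s0 where "s0 = (p - 3) div 2"
  have "s0 < S"
    using True unfolding s0_def by linarith
  have others: "pair_terms a b (2 * s + 3) i p = 0" if "s \<noteq> s0" for s
    using True that unfolding s0_def by (intro pair_terms_eq_0) presburger+
  have "(\<Sum>s<S. pair_terms a b (2 * s + 3) i p)
      = pair_terms a b (2 * s0 + 3) i p + (\<Sum>s\<in>{..<S} - {s0}. pair_terms a b (2 * s + 3) i p)"
    using \<open>s0 < S\<close> by (simp add: sum.remove)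
  also have "(\<Sum>s\<in>{..<S} - {s0}. pair_terms a b (2 * s + 3) i p) = 0"
    using others by (intro sum.neutral) blast
  finally show ?thesis
    using True by (simp add: s0_def)
next
  case False
  then have "(\<Sum>s<S. pair_terms a b (2 * s + 3) i p) = 0"
    by (intro sum.neutral ballI pair_terms_eq_0) auto
  then show ?thesis
    by (simp only: if_not_P[OF False])
qed

lemma three_inner_terms_eq:
  assumes "3 \<le> m" "p < m"
  shows "shared_terms m a b i p + (\<Sum>s<(m - 3) div 2. pair_terms a b (2 * s + 3) i p)
           + (if even m then last_column_terms a b (m - 1) i p else 0)
         = a i 0 * b 0 p + a i 1 * b 1 p + a i 2 * b 2 p"
    (is "shared_terms m a b i p + ?pairs + ?last = _")
proof -
  have "p = 0 \<or> p = 1 \<or> p = 2 \<or> (3 \<le> p \<and> odd p \<and> Suc p < m) \<or> (4 \<le> p \<and> even p)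
      \<or> (even m \<and> p = m - 1)"
    using assms by presburger
  then consider (base) "p \<le> 2" | (first) "3 \<le> p" "odd p" "Suc p < m"
    | (second) "4 \<le> p" "even p" | (last) "even m" "p = m - 1"
    by linarith
  then show ?thesis
  proof cases
    case base
    have "?pairs = 0" "?last = 0"
      using base assms by (auto simp: sum_pair_terms last_column_terms_def) presburger
    moreover have "p = 0 \<or> p = 1 \<or> p = 2"
      using base by linarith
    ultimately show ?thesis
      by (elim disjE) (simp_all add: shared_terms_def shifted_product_eq algebra_simps)
  next
    case first
    have pairs_eq: "?pairs = pair_terms a b p i p" and last_eq: "?last = 0"
      using first assms by (auto simp: sum_pair_terms last_column_terms_def)
    show ?thesis
      unfolding pairs_eq last_eq using first
      by (simp add: shared_terms_def pair_terms_def shifted_product_eq algebra_simps)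
  next
    case second
    then obtain q where q: "p = Suc q"
      by (cases p) auto
    have pairs_eq: "?pairs = pair_terms a b q i p" and last_eq: "?last = 0"
      using second assms q by (auto simp: sum_pair_terms last_column_terms_def) presburger+
    show ?thesis
      unfolding pairs_eq last_eq using second q
      by (simp add: shared_terms_def pair_terms_def shifted_product_eq algebra_simps)
  next
    case last
    have pairs_eq: "?pairs = 0" and last_eq: "?last = last_column_terms a b p i p"
      using last assms by (auto simp: sum_pair_terms)
    have "3 \<le> p" "odd p" "\<not> Suc p < m"
      using last assms by presburger+
    then show ?thesis
      unfolding pairs_eq last_eq
      by (simp add: shared_terms_def last_column_terms_def shifted_product_eq algebra_simps)
  qed
qed

lemma computable_three_inner:
  assumes "3 \<le> n" "3 \<le> m"
  shows "computable l n m a b (6 * l + 3 + (m - 3) div 2 * (3 * l + 3) + (if even m then 2 * l + 1 else 0))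
           (\<lambda>i p. \<Sum>j<3. a i j * b j p)"
proof -
  let ?S = "(m - 3) div 2"
  have "Suc (2 * s + 3) < m" if "s < ?S" for s
    using that by presburger
  then have pairs: "computable l n m a b (card {..<?S} * (3 * l + 3))
      (\<lambda>i p. \<Sum>s<?S. pair_terms a b (2 * s + 3) i p)"
    by (intro computable_sum computable_pair_terms) (simp_all add: assms)
  have last: "computable l n m a b (if even m then 2 * l + 1 else 0)
      (\<lambda>i p. if even m then last_column_terms a b (m - 1) i p else 0)"
    using computable_last_column_terms[of n m "m - 1"] computable_zero assms
    by (cases "even m") simp_all
  have "computable l n m a b (6 * l + 3 + card {..<?S} * (3 * l + 3) + (if even m then 2 * l + 1 else 0))
      (\<lambda>i p. shared_terms m a b i p + (\<Sum>s<?S. pair_terms a b (2 * s + 3) i p)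
         + (if even m then last_column_terms a b (m - 1) i p else 0))"
    by (intro computable_add computable_shared_terms pairs last assms)
  then show ?thesis
  proof (rule computable_cong)
    fix i p
    assume "p < m"
    then show "shared_terms m a b i p + (\<Sum>s<?S. pair_terms a b (2 * s + 3) i p)
        + (if even m then last_column_terms a b (m - 1) i p else 0) = (\<Sum>j<3. a i j * b j p)"
      by (simp only: three_inner_terms_eq assms) (simp add: eval_nat_numeral)
  qed simp
qed

lemma computable_odd_inner:
  assumes "2 * R + 3 \<le> n" "3 \<le> m"
  shows "computable l n m a b
           (6 * l + 3 + (m - 3) div 2 * (3 * l + 3) + (if even m then 2 * l + 1 else 0)
              + R * (l * m + l + m - 1))
           (\<lambda>i p. \<Sum>j<2 * R + 3. a i j * b j p)"
  using assms(1)
proof (induction R)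
  case 0
  then have "computable l n m a b
      (6 * l + 3 + (m - 3) div 2 * (3 * l + 3) + (if even m then 2 * l + 1 else 0))
      (\<lambda>i p. \<Sum>j<3. a i j * b j p)"
    by (intro computable_three_inner assms(2)) simp
  then show ?case
    by (rule computable_cong) simp_all
next
  case (Suc R)
  have step: "computable l n m a b
      (6 * l + 3 + (m - 3) div 2 * (3 * l + 3) + (if even m then 2 * l + 1 else 0)
         + R * (l * m + l + m - 1) + (l * m + l + m - 1))
      (\<lambda>i p. (\<Sum>j<2 * R + 3. a i j * b j p)
         + (a i (2 * R + 3) * b (2 * R + 3) p + a i (Suc (2 * R + 3)) * b (Suc (2 * R + 3)) p))"
    using Suc assms(2) by (intro computable_add computable_inner_pair) simp_all
  have idx: "2 * Suc R + 3 = Suc (Suc (2 * R + 3))"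
    by simp
  show ?case
    using step
  proof (rule computable_cong)
    fix i p
    show "(\<Sum>j<2 * R + 3. a i j * b j p)
        + (a i (2 * R + 3) * b (2 * R + 3) p + a i (Suc (2 * R + 3)) * b (Suc (2 * R + 3)) p)
        = (\<Sum>j<2 * Suc R + 3. a i j * b j p)"
      unfolding idx sum.lessThan_Suc by (simp add: add.assoc)
  qed (simp only: mult_Suc add_ac)
qed

theorem mainTheorem6:
  fixes l n m :: nat
  assumes "odd n" and "n \<ge> 3" and "l \<ge> 1" and "m \<ge> 3"
  shows "(odd m \<longrightarrow> mult_computable l n m (n * (l * m + l + m - 1) div 2))
       \<and> (even m \<longrightarrow> mult_computable l n m ((n * (l * m + l + m - 1) + l - 1) div 2))"
proof -
  have "\<exists>R. n = 2 * R + 3"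
    using assms(1,2) by presburger
  then obtain R where n: "n = 2 * R + 3" ..
  let ?k = "6 * l + 3 + (m - 3) div 2 * (3 * l + 3) + (if even m then 2 * l + 1 else 0)
    + R * (l * m + l + m - 1)"
  have "computable l n m (\<lambda>i j. X (VarA i j)) (\<lambda>j p. X (VarB j p)) ?k
      (\<lambda>i p. \<Sum>j<n. X (VarA i j) * X (VarB j p))"
    unfolding n by (rule computable_odd_inner) (simp_all add: assms(4))
  then have computable: "mult_computable l n m ?k"
    by (rule mult_computable_if_computable)
  show ?thesis
  proof (intro conjI impI)
    assume "odd m"
    then have "\<exists>S. m = 2 * S + 3"
      using assms(4) by presburger
    then obtain S where m: "m = 2 * S + 3" ..
    have "n * (l * m + l + m - 1) = 2 * ?k"
      by (simp add: n m algebra_simps)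
    with computable show "mult_computable l n m (n * (l * m + l + m - 1) div 2)"
      by simp
  next
    assume "even m"
    then have "\<exists>S. m = 2 * S + 4"
      using assms(4) by presburger
    then obtain S where m: "m = 2 * S + 4" ..
    have "n * (l * m + l + m - 1) + l - 1 = 2 * ?k"
      using assms(3) by (simp add: n m algebra_simps)
    with computable show "mult_computable l n m ((n * (l * m + l + m - 1) + l - 1) div 2)"
      by simp
  qed
qed

end
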